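(* Let $(X,T)$ be a topological dynamical system and $\mu$ a $T$-invariant Borel probability measure on $X$. Then $\mu$ has bounded complexity with respect to $\{\bar d_n\}$ if and only if $\mu$ has bounded complexity with respect to $\{\hat d_n\}$.
   Context: A t.d.s. $(X,T)$ consists of a compact metric space $(X,d)$ and a continuous map $T\colon X\to X$. Let $\bar d_n(x,y)=\frac1n\sum_{i=0}^{n-1}d(T^ix,T^iy)$ and $\hat d_n(x,y)=\max\{\bar d_k(x,y)\colon1\le k\le n\}$. For $\rho_n\in\{\bar d_n,\hat d_n\}$ let $B_{\rho_n}(x,\varepsilon)=\{y\colon\rho_n(x,y)<\varepsilon\}$ and $\mathrm{span}^{\rho}_\mu(n,\varepsilon)=\min\{\#(F)\colon F\subset X,\ \mu(\bigcup_{x\in F}B_{\rho_n}(x,\varepsilon))>1-\varepsilon\}$. $\mu$ has bounded complexity with respect to $\{\rho_n\}$ if for every $\varepsilon>0$ there is a positive integer $C$ with $\mathrm{span}^{\rho}_\mu(n,\varepsilon)\le C$ for all $n\ge1$. *)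

theory Defs
  imports "HOL-Probability.Probability"
begin

definition dbar :: "('a::metric_space \<Rightarrow> 'a) \<Rightarrow> nat \<Rightarrow> 'a \<Rightarrow> 'a \<Rightarrow> real" where
  "dbar T n x y = (\<Sum>i<n. dist ((T ^^ i) x) ((T ^^ i) y)) / real n"

definition dhat :: "('a::metric_space \<Rightarrow> 'a) \<Rightarrow> nat \<Rightarrow> 'a \<Rightarrow> 'a \<Rightarrow> real" where
  "dhat T n x y = Max ((\<lambda>k. dbar T k x y) ` {1..n})"

definition rball :: "'a set \<Rightarrow> (nat \<Rightarrow> 'a \<Rightarrow> 'a \<Rightarrow> real) \<Rightarrow> nat \<Rightarrow> 'a \<Rightarrow> real \<Rightarrow> 'a set" where
  "rball X \<rho> n x \<epsilon> = {y \<in> X. \<rho> n x y < \<epsilon>}"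

definition span_mu :: "'a set \<Rightarrow> 'a measure \<Rightarrow> (nat \<Rightarrow> 'a \<Rightarrow> 'a \<Rightarrow> real) \<Rightarrow> nat \<Rightarrow> real \<Rightarrow> nat" where
  "span_mu X \<mu> \<rho> n \<epsilon> =
     Inf {card F | F. finite F \<and> F \<subseteq> X \<and> measure \<mu> (\<Union>x\<in>F. rball X \<rho> n x \<epsilon>) > 1 - \<epsilon>}"

definition bounded_complexity :: "'a set \<Rightarrow> 'a measure \<Rightarrow> (nat \<Rightarrow> 'a \<Rightarrow> 'a \<Rightarrow> real) \<Rightarrow> bool" where
  "bounded_complexity X \<mu> \<rho> \<longleftrightarrow>
     (\<forall>\<epsilon>>0. \<exists>C::nat. C > 0 \<and> (\<forall>n\<ge>1. span_mu X \<mu> \<rho> n \<epsilon> \<le> C))"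

end

theory Submission
  imports Defs
begin

text \<open>
  Since \<open>dbar T n \<le> dhat T n\<close>, spanning sets for \<open>dhat\<close> are spanning sets for \<open>dbar\<close>.
  Conversely, let \<open>F\<close> span with respect to \<open>dbar T (2 * n)\<close> at scale \<open>\<epsilon>\<^sup>2/4\<close>. If
  \<open>dbar T (2 * n) z y < \<epsilon>\<^sup>2/4\<close>, the discrete maximal inequality (rising-sun lemma) shows
  that \<open>T\<^sup>i y\<close> lies in the \<open>dhat T n\<close>-ball of radius \<open>\<epsilon>\<close> around \<open>T\<^sup>i z\<close> for more than
  \<open>n (1 - \<epsilon>/2)\<close> of the times \<open>i < n\<close>. Integrating over \<open>\<mu>\<close> and using invariance, some
  time \<open>i < n\<close> is such that \<open>T\<^sup>i ` F\<close> spans with respect to \<open>dhat T n\<close> at scale \<open>\<epsilon>\<close>,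
  with no more points than \<open>F\<close>.
\<close>

definition heavy_starts :: "(nat \<Rightarrow> real) \<Rightarrow> real \<Rightarrow> nat \<Rightarrow> nat \<Rightarrow> nat set" where
  "heavy_starts a \<epsilon> m N = {i \<in> {m..<N}. \<exists>k\<ge>1. i + k \<le> N \<and> \<epsilon> * k \<le> (\<Sum>j\<in>{i..<i+k}. a j)}"

lemma heavy_starts_card_le:
  fixes a :: "nat \<Rightarrow> real"
  assumes nonneg: "\<And>j. 0 \<le> a j" and "0 \<le> \<epsilon>"
  shows "\<epsilon> * card (heavy_starts a \<epsilon> m N) \<le> (\<Sum>j\<in>{m..<N}. a j)"
proof (induction "N - m" arbitrary: m rule: less_induct)
  case less
  consider "N \<le> m" | "m < N" "m \<notin> heavy_starts a \<epsilon> m N" | "m \<in> heavy_starts a \<epsilon> m N"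
    by (cases "m < N") auto
  then show ?case
  proof cases
    case 1
    then show ?thesis by (simp add: heavy_starts_def)
  next
    case 2
    then have "heavy_starts a \<epsilon> m N = heavy_starts a \<epsilon> (Suc m) N"
      unfolding heavy_starts_def by (auto simp: Suc_le_eq dest: le_neq_implies_less)
    moreover have "\<epsilon> * card (heavy_starts a \<epsilon> (Suc m) N) \<le> (\<Sum>j\<in>{Suc m..<N}. a j)"
      using 2 by (intro less) auto
    ultimately show ?thesis
      using 2 nonneg by (simp add: sum.atLeast_Suc_lessThan add_increasing)
  next
    case 3
    then obtain k where k: "k \<ge> 1" "m + k \<le> N" "\<epsilon> * k \<le> (\<Sum>j\<in>{m..<m+k}. a j)"
      unfolding heavy_starts_def by auto
    \<comment> \<open>the heavy window \<open>{m..<m+k}\<close> pays for all heavy starts inside it\<close>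
    have "heavy_starts a \<epsilon> m N \<subseteq> {m..<m+k} \<union> heavy_starts a \<epsilon> (m+k) N"
      unfolding heavy_starts_def by auto
    then have "card (heavy_starts a \<epsilon> m N) \<le> card ({m..<m+k} \<union> heavy_starts a \<epsilon> (m+k) N)"
      by (intro card_mono) (simp_all add: heavy_starts_def)
    also have "\<dots> \<le> card {m..<m+k} + card (heavy_starts a \<epsilon> (m+k) N)"
      by (rule card_Un_le)
    finally have "real (card (heavy_starts a \<epsilon> m N)) \<le> real k + card (heavy_starts a \<epsilon> (m+k) N)"
      by simp
    then have "\<epsilon> * card (heavy_starts a \<epsilon> m N) \<le> \<epsilon> * k + \<epsilon> * card (heavy_starts a \<epsilon> (m+k) N)"
      using \<open>0 \<le> \<epsilon>\<close> by (metis distrib_left mult_left_mono)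
    also have "\<epsilon> * card (heavy_starts a \<epsilon> (m+k) N) \<le> (\<Sum>j\<in>{m+k..<N}. a j)"
      using k by (intro less) auto
    also have "\<epsilon> * k + (\<Sum>j\<in>{m+k..<N}. a j) \<le> (\<Sum>j\<in>{m..<m+k}. a j) + (\<Sum>j\<in>{m+k..<N}. a j)"
      using k by simp
    also have "\<dots> = (\<Sum>j\<in>{m..<N}. a j)"
      using k by (intro sum.atLeastLessThan_concat) auto
    finally show ?thesis by simp
  qed
qed

lemma funpow_image_subset:
  assumes "T ` X \<subseteq> X"
  shows "(T ^^ i) ` X \<subseteq> X"
  by (induction i) (use assms in auto)

lemma continuous_on_funpow:
  assumes "T ` X \<subseteq> X" "continuous_on X T"
  shows "continuous_on X (T ^^ i)"
proof (induction i)
  case (Suc i)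
  have "continuous_on X (T \<circ> T ^^ i)"
    using Suc continuous_on_subset[OF assms(2) funpow_image_subset[OF assms(1)]]
    by (rule continuous_on_compose)
  then show ?case by simp
qed (simp add: continuous_on_id)

lemma measurable_funpow:
  assumes "T \<in> M \<rightarrow>\<^sub>M M"
  shows "T ^^ i \<in> M \<rightarrow>\<^sub>M M"
proof (induction i)
  case (Suc i)
  show ?case
    unfolding funpow.simps(2) by (rule measurable_comp[OF Suc assms])
qed (simp add: id_def)

lemma distr_funpow:
  assumes "T \<in> M \<rightarrow>\<^sub>M M" "distr M M T = M"
  shows "distr M M (T ^^ i) = M"
proof (induction i)
  case (Suc i)
  have "distr M M (T ^^ Suc i) = distr (distr M M (T ^^ i)) M T"
    unfolding funpow.simps(2) by (rule distr_distr[OF assms(1) measurable_funpow[OF assms(1)], symmetric])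
  also have "\<dots> = M"
    using Suc assms(2) by simp
  finally show ?case .
qed (simp add: id_def)

lemma dbar_funpow:
  "dbar T k ((T ^^ i) x) ((T ^^ i) y) = (\<Sum>j\<in>{i..<i+k}. dist ((T ^^ j) x) ((T ^^ j) y)) / k"
proof -
  have "(\<Sum>j<k. dist ((T ^^ j) ((T ^^ i) x)) ((T ^^ j) ((T ^^ i) y)))
      = (\<Sum>j<k. dist ((T ^^ (j + i)) x) ((T ^^ (j + i)) y))"
    by (simp add: funpow_add)
  also have "\<dots> = (\<Sum>j\<in>{i..<i+k}. dist ((T ^^ j) x) ((T ^^ j) y))"
    using sum.shift_bounds_nat_ivl[of "\<lambda>j. dist ((T ^^ j) x) ((T ^^ j) y)" 0 i k]
    by (simp add: atLeast0LessThan add.commute)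
  finally show ?thesis by (simp add: dbar_def)
qed

lemma dhat_less_iff:
  assumes "1 \<le> n"
  shows "dhat T n x y < e \<longleftrightarrow> (\<forall>k\<in>{1..n}. dbar T k x y < e)"
  using assms unfolding dhat_def by (subst Max_less_iff) auto

lemma dbar_le_dhat: "1 \<le> n \<Longrightarrow> dbar T n x y \<le> dhat T n x y"
  unfolding dhat_def by (intro Max_ge) auto

lemma dbar_self: "dbar T k x x = 0"
  by (simp add: dbar_def)

lemma dhat_self: "1 \<le> n \<Longrightarrow> dhat T n x x = 0"
  unfolding dhat_def dbar_self by (subst image_constant) auto

lemma dhat_Suc: "1 \<le> n \<Longrightarrow> dhat T (Suc n) x y = max (dbar T (Suc n) x y) (dhat T n x y)"
  unfolding dhat_def by (simp add: atLeastAtMostSuc_conv Max_insert)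

lemma continuous_on_dbar:
  assumes "T ` X \<subseteq> X" "continuous_on X T"
  shows "continuous_on X (dbar T k x)"
  unfolding dbar_def divide_inverse
  by (intro continuous_intros continuous_on_funpow[OF assms])

lemma continuous_on_dhat:
  assumes "T ` X \<subseteq> X" "continuous_on X T" "1 \<le> n"
  shows "continuous_on X (dhat T n x)"
  using \<open>1 \<le> n\<close>
proof (induction n rule: dec_induct)
  case base
  show ?case
    using continuous_on_dbar[OF assms(1,2), of 1 x] by (simp add: dhat_def)
next
  case (step n)
  then show ?case
    by (simp add: dhat_Suc[OF step.hyps(1)] continuous_on_max continuous_on_dbar[OF assms(1,2)])
qed

lemma rball_eq_Int_open:
  assumes "continuous_on X (\<rho> n x)"
  shows "\<exists>V. open V \<and> rball X \<rho> n x e = X \<inter> V"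
proof -
  obtain V where "open V" "V \<inter> X = \<rho> n x -` {..<e} \<inter> X"
    using assms open_lessThan unfolding continuous_on_open_invariant by blast
  then show ?thesis
    unfolding rball_def by auto
qed

lemma rball_in_sets_restrict_borel:
  "continuous_on X (\<rho> n x) \<Longrightarrow> rball X \<rho> n x e \<in> sets (restrict_space borel X)"
  using rball_eq_Int_open by (fastforce simp: sets_restrict_space)

lemma ex_finite_rball_cover:
  assumes "compact X" and cont: "\<And>x. continuous_on X (\<rho> n x)"
    and centre: "\<And>x. x \<in> X \<Longrightarrow> \<rho> n x x < e"
  obtains F where "finite F" "F \<subseteq> X" "(\<Union>x\<in>F. rball X \<rho> n x e) = X"
proof -
  obtain V where V: "\<And>x. open (V x)" "\<And>x. rball X \<rho> n x e = X \<inter> V x"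
  proof -
    have "\<forall>x. \<exists>V. open V \<and> rball X \<rho> n x e = X \<inter> V"
      using rball_eq_Int_open cont by blast
    then show ?thesis
      using that by metis
  qed
  have "X \<subseteq> (\<Union>x\<in>X. V x)"
    using centre V(2) unfolding rball_def by blast
  then obtain F where "F \<subseteq> X" "finite F" "X \<subseteq> (\<Union>x\<in>F. V x)"
    using compactE_image[OF \<open>compact X\<close>, of X V] V(1) by metis
  moreover have "(\<Union>x\<in>F. rball X \<rho> n x e) = X \<inter> (\<Union>x\<in>F. V x)"
    using V(2) by auto
  ultimately show ?thesis
    using that by (simp add: Int_absorb2)
qed

definition spanning_set ::
    "'a set \<Rightarrow> 'a measure \<Rightarrow> (nat \<Rightarrow> 'a \<Rightarrow> 'a \<Rightarrow> real) \<Rightarrow> nat \<Rightarrow> real \<Rightarrow> 'a set \<Rightarrow> bool" where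
  "spanning_set X \<mu> \<rho> n \<epsilon> F \<longleftrightarrow>
     finite F \<and> F \<subseteq> X \<and> measure \<mu> (\<Union>x\<in>F. rball X \<rho> n x \<epsilon>) > 1 - \<epsilon>"

lemma span_mu_le_card: "spanning_set X \<mu> \<rho> n \<epsilon> F \<Longrightarrow> span_mu X \<mu> \<rho> n \<epsilon> \<le> card F"
  unfolding span_mu_def spanning_set_def by (rule cInf_lower) auto

lemma span_mu_attained:
  assumes "spanning_set X \<mu> \<rho> n \<epsilon> F"
  obtains G where "spanning_set X \<mu> \<rho> n \<epsilon> G" "card G = span_mu X \<mu> \<rho> n \<epsilon>"
proof -
  have "span_mu X \<mu> \<rho> n \<epsilon> \<in> {card G | G. spanning_set X \<mu> \<rho> n \<epsilon> G}"
    unfolding span_mu_def spanning_set_def using assms[unfolded spanning_set_def]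
    by (intro Inf_nat_def1) auto
  then show ?thesis
    using that by auto
qed

lemma spanning_set_empty: "1 < \<epsilon> \<Longrightarrow> spanning_set X \<mu> \<rho> n \<epsilon> {}"
  by (simp add: spanning_set_def)

lemma bounded_complexity_iff_spanning_sets:
  assumes "\<And>n \<epsilon>. 1 \<le> n \<Longrightarrow> 0 < \<epsilon> \<Longrightarrow> \<exists>F. spanning_set X \<mu> \<rho> n \<epsilon> F"
  shows "bounded_complexity X \<mu> \<rho> \<longleftrightarrow>
           (\<forall>\<epsilon>>0. \<exists>C. \<forall>n\<ge>1. \<exists>F. spanning_set X \<mu> \<rho> n \<epsilon> F \<and> card F \<le> C)"
proof
  assume bc: "bounded_complexity X \<mu> \<rho>"
  show "\<forall>\<epsilon>>0. \<exists>C. \<forall>n\<ge>1. \<exists>F. spanning_set X \<mu> \<rho> n \<epsilon> F \<and> card F \<le> C"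
  proof (intro allI impI)
    fix \<epsilon> :: real
    assume "0 < \<epsilon>"
    then obtain C where C: "\<forall>n\<ge>1. span_mu X \<mu> \<rho> n \<epsilon> \<le> C"
      using bc unfolding bounded_complexity_def by blast
    have "\<exists>F. spanning_set X \<mu> \<rho> n \<epsilon> F \<and> card F \<le> C" if "1 \<le> n" for n
      using assms[OF that \<open>0 < \<epsilon>\<close>] C that by (metis span_mu_attained)
    then show "\<exists>C. \<forall>n\<ge>1. \<exists>F. spanning_set X \<mu> \<rho> n \<epsilon> F \<and> card F \<le> C"
      by blast
  qed
next
  assume small: "\<forall>\<epsilon>>0. \<exists>C. \<forall>n\<ge>1. \<exists>F. spanning_set X \<mu> \<rho> n \<epsilon> F \<and> card F \<le> C"
  show "bounded_complexity X \<mu> \<rho>"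
    unfolding bounded_complexity_def
  proof (intro allI impI)
    fix \<epsilon> :: real
    assume "0 < \<epsilon>"
    then obtain C where "\<forall>n\<ge>1. \<exists>F. spanning_set X \<mu> \<rho> n \<epsilon> F \<and> card F \<le> C"
      using small by blast
    then have "\<forall>n\<ge>1. span_mu X \<mu> \<rho> n \<epsilon> \<le> max C 1"
      using span_mu_le_card by (metis le_trans max.coboundedI1)
    then show "\<exists>C>0. \<forall>n\<ge>1. span_mu X \<mu> \<rho> n \<epsilon> \<le> C"
      by (intro exI[of _ "max C 1"]) auto
  qed
qed

lemma (in finite_measure) measure_mult_le_sum_measure:
  assumes "U \<in> sets M" "\<And>i. i < n \<Longrightarrow> A i \<in> sets M"
    and "\<And>y. y \<in> U \<Longrightarrow> c \<le> (\<Sum>i<n. indicator (A i) y)"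
  shows "measure M U * c \<le> (\<Sum>i<n. measure M (A i))"
proof -
  have "measure M U * c = (\<integral>y. indicator U y * c \<partial>M)"
    using assms(1) by (simp add: Int_absorb2 sets.sets_into_space)
  also have "\<dots> \<le> (\<integral>y. (\<Sum>i<n. indicator (A i) y) \<partial>M)"
  proof (rule integral_mono)
    show "integrable M (\<lambda>y. indicator U y * c)"
      using assms(1) by (simp add: less_top[symmetric])
    show "integrable M (\<lambda>y. \<Sum>i<n. indicator (A i) y :: real)"
      using assms(2) by (auto intro!: integrable_sum simp: less_top[symmetric])
    show "indicator U y * c \<le> (\<Sum>i<n. indicator (A i) y)" for y
      using assms(3)[of y] by (cases "y \<in> U") (simp_all add: sum_nonneg)
  qed
  also have "\<dots> = (\<Sum>i<n. measure M (A i))"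
    using assms(2)
    by (subst Bochner_Integration.integral_sum[where f = "\<lambda>i y. indicator (A i) y :: real"]) (auto simp: less_top[symmetric] Int_absorb2 sets.sets_into_space)
  finally show ?thesis .
qed

lemma card_dhat_close_gt:
  assumes "1 \<le> n" "0 < \<epsilon>" "dbar T (2 * n) z y < \<epsilon>^2 / 4"
  shows "real n * (1 - \<epsilon> / 2) < card {i\<in>{..<n}. dhat T n ((T ^^ i) z) ((T ^^ i) y) < \<epsilon>}"
proof -
  define a where "a j = dist ((T ^^ j) z) ((T ^^ j) y)" for j
  define close where "close = {i\<in>{..<n}. dhat T n ((T ^^ i) z) ((T ^^ i) y) < \<epsilon>}"
  have far: "{..<n} - close \<subseteq> heavy_starts a \<epsilon> 0 (2 * n)"
  proof
    fix i
    assume i: "i \<in> {..<n} - close"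
    then have "\<not> dhat T n ((T ^^ i) z) ((T ^^ i) y) < \<epsilon>"
      unfolding close_def by simp
    then obtain k where k: "k \<in> {1..n}" "\<epsilon> \<le> dbar T k ((T ^^ i) z) ((T ^^ i) y)"
      using dhat_less_iff[OF \<open>1 \<le> n\<close>] by (meson not_less)
    then have "\<epsilon> * k \<le> (\<Sum>j\<in>{i..<i+k}. a j)"
      by (simp add: dbar_funpow a_def pos_le_divide_eq mult.commute)
    then show "i \<in> heavy_starts a \<epsilon> 0 (2 * n)"
      using i k(1) unfolding heavy_starts_def by auto
  qed
  have "real (card ({..<n} - close)) \<le> card (heavy_starts a \<epsilon> 0 (2 * n))"
    using far by (simp add: card_mono heavy_starts_def)
  then have "\<epsilon> * card ({..<n} - close) \<le> \<epsilon> * card (heavy_starts a \<epsilon> 0 (2 * n))"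
    using \<open>0 < \<epsilon>\<close> by simp
  also have "\<dots> \<le> (\<Sum>j\<in>{0..<2*n}. a j)"
    by (rule heavy_starts_card_le) (use \<open>0 < \<epsilon>\<close> in \<open>auto simp: a_def\<close>)
  also have "\<dots> = 2 * n * dbar T (2 * n) z y"
    using \<open>1 \<le> n\<close> by (simp add: dbar_def a_def atLeast0LessThan)
  also have "\<dots> < \<epsilon> * (n * \<epsilon> / 2)"
    using assms by (simp add: power2_eq_square)
  finally have far_card: "card ({..<n} - close) < n * \<epsilon> / 2"
    using \<open>0 < \<epsilon>\<close> by simp
  have "close \<subseteq> {..<n}"
    unfolding close_def by auto
  then have "card close + card ({..<n} - close) = n"
    using card_Diff_subset[of close "{..<n}"] card_mono[of "{..<n}" close]
    by (simp add: finite_subset)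
  with far_card show ?thesis
    unfolding close_def[symmetric] by (simp add: algebra_simps flip: of_nat_add)
qed

locale invariant_tds = prob_space \<mu> for \<mu> :: "'a::metric_space measure" +
  fixes X :: "'a set" and T :: "'a \<Rightarrow> 'a"
  assumes compact_X: "compact X"
    and T_maps_into: "T ` X \<subseteq> X"
    and continuous_T: "continuous_on X T"
    and sets_eq: "sets \<mu> = sets (restrict_space borel X)"
    and T_measurable: "T \<in> \<mu> \<rightarrow>\<^sub>M \<mu>"
    and T_invariant: "distr \<mu> \<mu> T = \<mu>"
begin

lemma space_eq: "space \<mu> = X"
  using sets_eq_imp_space_eq[OF sets_eq] by (simp add: space_restrict_space)

lemma rball_in_sets: "continuous_on X (\<rho> n x) \<Longrightarrow> rball X \<rho> n x e \<in> sets \<mu>"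
  unfolding sets_eq by (rule rball_in_sets_restrict_borel)

lemma rball_union_in_sets:
  assumes "finite F" "\<And>x. continuous_on X (\<rho> n x)"
  shows "(\<Union>x\<in>F. rball X \<rho> n x e) \<in> sets \<mu>"
  using assms(1) by (rule sets.finite_UN) (rule rball_in_sets[of \<rho> n, OF assms(2)])

lemma ex_spanning_set:
  assumes "0 < \<epsilon>" "\<And>x. continuous_on X (\<rho> n x)" "\<And>x. x \<in> X \<Longrightarrow> \<rho> n x x = 0"
  shows "\<exists>F. spanning_set X \<mu> \<rho> n \<epsilon> F"
proof -
  have "\<rho> n x x < \<epsilon>" if "x \<in> X" for x
    using assms(1,3) that by simp
  then obtain F where F: "finite F" "F \<subseteq> X" "(\<Union>x\<in>F. rball X \<rho> n x \<epsilon>) = X"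
    using ex_finite_rball_cover[where \<rho> = \<rho> and n = n and e = \<epsilon>, OF compact_X assms(2)] by blast
  then have "measure \<mu> (\<Union>x\<in>F. rball X \<rho> n x \<epsilon>) = 1"
    using prob_space space_eq by simp
  then show ?thesis
    using F \<open>0 < \<epsilon>\<close> unfolding spanning_set_def by auto
qed

lemma bounded_complexity_dbar_iff:
  "bounded_complexity X \<mu> (dbar T) \<longleftrightarrow>
     (\<forall>\<epsilon>>0. \<exists>C. \<forall>n\<ge>1. \<exists>F. spanning_set X \<mu> (dbar T) n \<epsilon> F \<and> card F \<le> C)"
  by (rule bounded_complexity_iff_spanning_sets, rule ex_spanning_set)
    (simp_all add: continuous_on_dbar[OF T_maps_into continuous_T] dbar_self)

lemma bounded_complexity_dhat_iff:
  "bounded_complexity X \<mu> (dhat T) \<longleftrightarrow>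
     (\<forall>\<epsilon>>0. \<exists>C. \<forall>n\<ge>1. \<exists>F. spanning_set X \<mu> (dhat T) n \<epsilon> F \<and> card F \<le> C)"
  by (rule bounded_complexity_iff_spanning_sets, rule ex_spanning_set)
    (simp_all add: continuous_on_dhat[OF T_maps_into continuous_T] dhat_self)

lemma measure_funpow_vimage:
  assumes "W \<in> sets \<mu>"
  shows "measure \<mu> ((T ^^ i) -` W \<inter> X) = measure \<mu> W"
proof -
  have "measure \<mu> W = measure (distr \<mu> \<mu> (T ^^ i)) W"
    using distr_funpow[OF T_measurable T_invariant] by simp
  also have "\<dots> = measure \<mu> ((T ^^ i) -` W \<inter> X)"
    using measure_distr[OF measurable_funpow[OF T_measurable] assms] space_eq by simp
  finally show ?thesis ..
qed

lemma spanning_set_dbar_if_dhat: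
  assumes "1 \<le> n" "spanning_set X \<mu> (dhat T) n \<epsilon> F"
  shows "spanning_set X \<mu> (dbar T) n \<epsilon> F"
proof -
  have "rball X (dhat T) n x \<epsilon> \<subseteq> rball X (dbar T) n x \<epsilon>" for x
    using dbar_le_dhat[OF \<open>1 \<le> n\<close>, of T x] unfolding rball_def by (auto intro: le_less_trans)
  then have "(\<Union>x\<in>F. rball X (dhat T) n x \<epsilon>) \<subseteq> (\<Union>x\<in>F. rball X (dbar T) n x \<epsilon>)"
    by blast
  moreover have "(\<Union>x\<in>F. rball X (dbar T) n x \<epsilon>) \<in> sets \<mu>"
    using assms(2) unfolding spanning_set_def
    by (intro rball_union_in_sets continuous_on_dbar[OF T_maps_into continuous_T]) auto
  ultimately have "measure \<mu> (\<Union>x\<in>F. rball X (dhat T) n x \<epsilon>) \<le> measure \<mu> (\<Union>x\<in>F. rball X (dbar T) n x \<epsilon>)"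
    by (rule finite_measure_mono)
  then show ?thesis
    using assms(2) unfolding spanning_set_def by linarith
qed

lemma ex_iterate_spanning_dhat:
  assumes "1 \<le> n" "0 < \<epsilon>" "\<epsilon> \<le> 1" and F: "spanning_set X \<mu> (dbar T) (2 * n) (\<epsilon>^2 / 4) F"
  shows "\<exists>i<n. spanning_set X \<mu> (dhat T) n \<epsilon> ((T ^^ i) ` F)"
proof (rule ccontr)
  define U where "U = (\<Union>z\<in>F. rball X (dbar T) (2 * n) z (\<epsilon>^2 / 4))"
  define W where "W i = (\<Union>z\<in>F. rball X (dhat T) n ((T ^^ i) z) \<epsilon>)" for i
  define A where "A i = (T ^^ i) -` W i \<inter> X" for i
  have "finite F" "F \<subseteq> X" and U_gt: "1 - \<epsilon>^2 / 4 < measure \<mu> U"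
    using F unfolding spanning_set_def U_def by auto
  have U_sets: "U \<in> sets \<mu>"
    unfolding U_def using \<open>finite F\<close>
    by (rule rball_union_in_sets) (rule continuous_on_dbar[OF T_maps_into continuous_T])
  have W_sets: "W i \<in> sets \<mu>" for i
    unfolding W_def using \<open>finite F\<close>
    by (rule sets.finite_UN)
      (rule rball_in_sets, rule continuous_on_dhat[OF T_maps_into continuous_T \<open>1 \<le> n\<close>])
  have A_sets: "A i \<in> sets \<mu>" for i
    using measurable_sets[OF measurable_funpow[OF T_measurable] W_sets] space_eq
    unfolding A_def by simp
  have visits: "real n * (1 - \<epsilon> / 2) \<le> (\<Sum>i<n. indicator (A i) y)" if y: "y \<in> U" for y
  proof -
    obtain z where z: "z \<in> F" "y \<in> X" "dbar T (2 * n) z y < \<epsilon>^2 / 4"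
      using y unfolding U_def rball_def by blast
    have "{i\<in>{..<n}. dhat T n ((T ^^ i) z) ((T ^^ i) y) < \<epsilon>} \<subseteq> {..<n} \<inter> {i. y \<in> A i}"
      using z funpow_image_subset[OF T_maps_into] unfolding A_def W_def rball_def by blast
    then have "card {i\<in>{..<n}. dhat T n ((T ^^ i) z) ((T ^^ i) y) < \<epsilon>} \<le> card ({..<n} \<inter> {i. y \<in> A i})"
      by (intro card_mono) auto
    moreover have "(\<Sum>i<n. indicator (A i) y) = real (card ({..<n} \<inter> {i. y \<in> A i}))"
      using sum_indicator_eq_card[of "{..<n}" "{i. y \<in> A i}"] by (simp add: indicator_def)
    ultimately show ?thesis
      using card_dhat_close_gt[OF assms(1,2) z(3)] by linarith
  qed
  assume no_iterate: "\<not> (\<exists>i<n. spanning_set X \<mu> (dhat T) n \<epsilon> ((T ^^ i) ` F))"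
  have W_le: "measure \<mu> (W i) \<le> 1 - \<epsilon>" if "i < n" for i
  proof (rule ccontr)
    assume "\<not> measure \<mu> (W i) \<le> 1 - \<epsilon>"
    moreover have "(\<Union>x\<in>(T ^^ i) ` F. rball X (dhat T) n x \<epsilon>) = W i"
      unfolding W_def by blast
    moreover have "(T ^^ i) ` F \<subseteq> X"
      using \<open>F \<subseteq> X\<close> funpow_image_subset[OF T_maps_into, of i] by blast
    ultimately have "spanning_set X \<mu> (dhat T) n \<epsilon> ((T ^^ i) ` F)"
      using \<open>finite F\<close> unfolding spanning_set_def by simp
    with no_iterate that show False
      by blast
  qed
  have "0 \<le> real n * (1 - \<epsilon> / 2)"
    using assms(3) by simp
  have "real n * ((1 - \<epsilon>^2 / 4) * (1 - \<epsilon> / 2)) = (1 - \<epsilon>^2 / 4) * (real n * (1 - \<epsilon> / 2))"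
    by (rule mult.left_commute)
  also have "\<dots> \<le> measure \<mu> U * (real n * (1 - \<epsilon> / 2))"
    using U_gt \<open>0 \<le> real n * (1 - \<epsilon> / 2)\<close> by (intro mult_right_mono) auto
  also have "\<dots> \<le> (\<Sum>i<n. measure \<mu> (A i))"
    by (rule measure_mult_le_sum_measure[OF U_sets A_sets visits])
  also have "\<dots> = (\<Sum>i<n. measure \<mu> (W i))"
    unfolding A_def by (simp add: measure_funpow_vimage W_sets)
  also have "\<dots> \<le> real n * (1 - \<epsilon>)"
    using sum_mono[of "{..<n}", OF W_le] by simp
  finally have "(1 - \<epsilon>^2 / 4) * (1 - \<epsilon> / 2) \<le> 1 - \<epsilon>"
    using \<open>1 \<le> n\<close> by simp
  moreover have "(1 - \<epsilon>^2 / 4) * (1 - \<epsilon> / 2) - (1 - \<epsilon>) = \<epsilon> / 8 * ((\<epsilon> - 1)^2 + 3)"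
    by (simp add: power2_eq_square field_simps)
  moreover have "0 < \<epsilon> / 8 * ((\<epsilon> - 1)^2 + 3)"
    using \<open>0 < \<epsilon>\<close> by (intro mult_pos_pos) (simp_all add: add_nonneg_pos)
  ultimately show False
    by linarith
qed

lemma bounded_complexity_dhat_if_dbar:
  assumes "bounded_complexity X \<mu> (dbar T)"
  shows "bounded_complexity X \<mu> (dhat T)"
  unfolding bounded_complexity_dhat_iff
proof (intro allI impI)
  fix \<epsilon> :: real
  assume "0 < \<epsilon>"
  show "\<exists>C. \<forall>n\<ge>1. \<exists>G. spanning_set X \<mu> (dhat T) n \<epsilon> G \<and> card G \<le> C"
  proof (cases "\<epsilon> \<le> 1")
    case False
    then show ?thesis
      using spanning_set_empty by (intro exI[of _ 0]) force
  next
    case True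
    obtain C where C: "\<forall>n\<ge>1. \<exists>F. spanning_set X \<mu> (dbar T) n (\<epsilon>^2 / 4) F \<and> card F \<le> C"
      using assms \<open>0 < \<epsilon>\<close> unfolding bounded_complexity_dbar_iff
      by (metis divide_pos_pos zero_less_numeral zero_less_power)
    have "\<exists>G. spanning_set X \<mu> (dhat T) n \<epsilon> G \<and> card G \<le> C" if n: "1 \<le> n" for n
    proof -
      have "1 \<le> 2 * n"
        using n by simp
      then obtain F where F: "spanning_set X \<mu> (dbar T) (2 * n) (\<epsilon>^2 / 4) F" "card F \<le> C"
        using C by blast
      obtain i where "spanning_set X \<mu> (dhat T) n \<epsilon> ((T ^^ i) ` F)"
        using ex_iterate_spanning_dhat[OF n \<open>0 < \<epsilon>\<close> True F(1)] by blast
      moreover have "card ((T ^^ i) ` F) \<le> C"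
        using card_image_le F unfolding spanning_set_def by (meson order_trans)
      ultimately show ?thesis
        by blast
    qed
    then show ?thesis
      by blast
  qed
qed

lemma bounded_complexity_dbar_if_dhat:
  "bounded_complexity X \<mu> (dhat T) \<Longrightarrow> bounded_complexity X \<mu> (dbar T)"
  unfolding bounded_complexity_dbar_iff bounded_complexity_dhat_iff
  using spanning_set_dbar_if_dhat by meson

end

theorem mainTheorem9:
  fixes X :: "'a::metric_space set" and T :: "'a \<Rightarrow> 'a" and \<mu> :: "'a measure"
  assumes "compact X" and "X \<noteq> {}"
    and "T ` X \<subseteq> X" and "continuous_on X T"
    and "prob_space \<mu>" and "sets \<mu> = sets (restrict_space borel X)"
    and "T \<in> measurable \<mu> \<mu>" and "distr \<mu> \<mu> T = \<mu>"
  shows "bounded_complexity X \<mu> (dbar T) \<longleftrightarrow> bounded_complexity X \<mu> (dhat T)"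
proof -
  interpret invariant_tds \<mu> X T
    using assms by (simp add: invariant_tds_def invariant_tds_axioms_def)
  show ?thesis
    using bounded_complexity_dhat_if_dbar bounded_complexity_dbar_if_dhat by blast
qed

end
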